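(* Let $n\ge 1$, $D\ge 1$, and let $X_n=\{\mathbf{x}^0,\ldots,\mathbf{x}^{n-1}\}\subseteq\{0,1\}^D$ consist of $n$ pairwise distinct vectors. Let $d=2\lceil\log_2 n\rceil$. Then there exist subsets $S_0,\ldots,S_{d-1}\subseteq\{0,\ldots,D-1\}$ such that the map $\mathbf{f}:\{0,1\}^D\to\{0,1\}^d$ defined by $f_k(\mathbf{x})=\bigoplus_{\ell\in S_k}x_\ell$ (the parity of the entries of $\mathbf{x}$ indexed by $S_k$) satisfies $\mathbf{f}(\mathbf{x}^i)\ne\mathbf{f}(\mathbf{x}^j)$ for all $i\ne j$.
   Context: Such an $\mathbf{f}$ is a two-layer network whose activation functions are parity functions of subsets of the input variables. *)

theory Defs
  imports Complex_Main
begin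

text \<open>A vector in {0,1}^D is modelled as a function nat => bool, of which only
  coordinates 0..D-1 are relevant. The parity of the entries of x indexed by S.\<close>
definition parity :: "nat set \<Rightarrow> (nat \<Rightarrow> bool) \<Rightarrow> bool" where
  "parity S x = odd (card {l \<in> S. x l})"

end

theory Submission
  imports Defs
begin

text \<open>Each parity map is linear over GF(2), so it separates two vectors iff it is odd on their
  sum, i.e. on the coordinatewise exclusive-or. For a nonzero vector v, toggling a coordinate l
  with v l flips the parity, so exactly half of all index sets are odd on v. Averaging over all
  index sets, some set is odd on at least half of any finite family of nonzero vectors; removing
  the vectors it handles and iterating, m sets suffice for fewer than 2^m vectors. The n(n-1)
  pairwise differences are fewer than n^2 \<le> 2^d.\<close>

lemma parity_insert:
  assumes "finite S" "l \<notin> S"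
  shows "parity (insert l S) v = (v l \<noteq> parity S v)"
proof -
  have "{k \<in> insert l S. v k} = (if v l then insert l {k \<in> S. v k} else {k \<in> S. v k})"
    by auto
  then show ?thesis
    using assms by (simp add: parity_def)
qed

lemma parity_xor:
  assumes "finite S"
  shows "parity S (\<lambda>l. a l \<noteq> b l) = (parity S a \<noteq> parity S b)"
  using assms
  by (induction S rule: finite_induct) (simp add: parity_def, auto simp: parity_insert)

lemma parity_toggle:
  assumes "finite S" "v l"
  shows "parity (if l \<in> S then S - {l} else insert l S) v = (\<not> parity S v)"
proof (cases "l \<in> S")
  case True
  then have "parity S v = (v l \<noteq> parity (S - {l}) v)"
    using parity_insert[of "S - {l}" l v] assms(1) by (simp add: insert_absorb)
  then show ?thesis
    using True assms(2) by simp
next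
  case False
  then show ?thesis
    using assms by (simp add: parity_insert)
qed

lemma card_even_parity_subsets:
  assumes "finite A" "l \<in> A" "v l"
  shows "card {S \<in> Pow A. \<not> parity S v} = 2 ^ (card A - 1)"
proof -
  define toggle where "toggle S = (if l \<in> S then S - {l} else insert l S)" for S
  define Ev where "Ev = {S \<in> Pow A. \<not> parity S v}"
  define Od where "Od = {S \<in> Pow A. parity S v}"
  have toggle_subset: "toggle S \<subseteq> A" if "S \<subseteq> A" for S
    using that assms(2) by (auto simp: toggle_def)
  have parity_toggled: "parity (toggle S) v = (\<not> parity S v)" if "S \<subseteq> A" for S
  proof -
    have "finite S"
      using that assms(1) finite_subset by blast
    then show ?thesis
      using parity_toggle[of S v l] assms(3) by (simp add: toggle_def)
  qed
  have toggle_toggle: "toggle (toggle S) = S" for S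
    by (auto simp: toggle_def)
  have "bij_betw toggle Ev Od"
    by (rule bij_betw_byWitness[where f' = toggle])
      (simp_all add: Ev_def Od_def toggle_toggle toggle_subset parity_toggled image_subset_iff)
  then have "card Ev = card Od"
    by (rule bij_betw_same_card)
  moreover have "card Ev + card Od = 2 ^ card A"
  proof -
    have "Ev \<union> Od = Pow A" "Ev \<inter> Od = {}" "finite Ev" "finite Od"
      using assms(1) by (auto simp: Ev_def Od_def)
    then show ?thesis
      using assms(1) card_Un_disjoint[of Ev Od] by (simp add: card_Pow)
  qed
  moreover obtain k where "card A = Suc k"
    using assms(1,2) by (metis card_Suc_Diff1)
  ultimately show ?thesis
    unfolding Ev_def by simp
qed

lemma exists_parity_odd_on_half:
  assumes "finite A" "finite P" "\<forall>v\<in>P. \<exists>l\<in>A. v l"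
  shows "\<exists>T\<subseteq>A. 2 * card {v \<in> P. \<not> parity T v} \<le> card P"
proof (rule ccontr)
  assume "\<not> ?thesis"
  then have many_even: "card P < 2 * card {v \<in> P. \<not> parity T v}" if "T \<in> Pow A" for T
    using that by (meson Pow_iff not_le)
  have card_A_Suc: "card A = Suc (card A - 1)" if "P \<noteq> {}"
  proof -
    have "A \<noteq> {}"
      using that assms(3) by blast
    then show ?thesis
      using assms(1) by (simp add: card_gt_0_iff)
  qed
  have "2 ^ card A * card P = (\<Sum>T\<in>Pow A. card P)"
    using assms(1) by (simp add: card_Pow)
  also have "\<dots> < (\<Sum>T\<in>Pow A. 2 * card {v \<in> P. \<not> parity T v})"
    using many_even assms(1) by (intro sum_strict_mono) auto
  also have "\<dots> = 2 * (\<Sum>T\<in>Pow A. card {v \<in> P. \<not> parity T v})"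
    by (simp add: sum_distrib_left)
  also have "\<dots> = 2 * (2 ^ (card A - 1) * card P)"
  proof -
    have "\<forall>v\<in>P. card {T \<in> Pow A. \<not> parity T v} = 2 ^ (card A - 1)"
      using assms card_even_parity_subsets by blast
    then show ?thesis
      using assms(1,2) sum_multicount[of "Pow A" P "\<lambda>T v. \<not> parity T v"] by simp
  qed
  finally have "2 ^ card A * card P < 2 * 2 ^ (card A - 1) * card P"
    by simp
  then show False
    using card_A_Suc by (cases "P = {}") (simp, metis power_Suc less_irrefl)
qed

lemma exists_parities_odd_on_each:
  assumes "finite A" "finite P" "\<forall>v\<in>P. \<exists>l\<in>A. v l" "card P < 2 ^ m"
  shows "\<exists>S. (\<forall>k<m. S k \<subseteq> A) \<and> (\<forall>v\<in>P. \<exists>k<m. parity (S k) v)"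
  using assms(2-4)
proof (induction m arbitrary: P)
  case 0
  then show ?case by simp
next
  case (Suc m)
  obtain T where T: "T \<subseteq> A" "2 * card {v \<in> P. \<not> parity T v} \<le> card P"
    using exists_parity_odd_on_half[OF assms(1) Suc.prems(1,2)] by blast
  with Suc.prems have "card {v \<in> P. \<not> parity T v} < 2 ^ m"
    by simp
  then obtain S where S: "\<forall>k<m. S k \<subseteq> A" "\<forall>v\<in>{v \<in> P. \<not> parity T v}. \<exists>k<m. parity (S k) v"
    using Suc.IH[of "{v \<in> P. \<not> parity T v}"] Suc.prems(1,2) by auto
  have "\<forall>k<Suc m. (S(m := T)) k \<subseteq> A"
    using S(1) T(1) by (simp add: less_Suc_eq)
  moreover have "\<exists>k<Suc m. parity ((S(m := T)) k) v" if "v \<in> P" for v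
  proof (cases "parity T v")
    case True
    then show ?thesis
      by (intro exI[of _ m]) simp
  next
    case False
    then obtain k where "k < m" "parity (S k) v"
      using S(2) \<open>v \<in> P\<close> by auto
    then show ?thesis
      by (intro exI[of _ k]) simp
  qed
  ultimately show ?case
    by blast
qed

lemma le_two_power_ceiling_log:
  assumes "n \<ge> 1"
  shows "n \<le> 2 ^ nat \<lceil>log 2 (real n)\<rceil>"
proof -
  have "real n \<le> 2 powr \<lceil>log 2 (real n)\<rceil>"
    using assms by (subst log_le_iff[symmetric]) auto
  also have "\<dots> = 2 ^ nat \<lceil>log 2 (real n)\<rceil>"
    using assms by (simp add: powr_realpow[symmetric])
  finally show ?thesis
    by (metis of_nat_le_iff of_nat_numeral of_nat_power)
qed

lemma square_le_two_power_double_ceiling_log: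
  assumes "n \<ge> 1"
  shows "n * n \<le> 2 ^ nat (2 * \<lceil>log 2 (real n)\<rceil>)"
proof -
  have "n * n \<le> 2 ^ nat \<lceil>log 2 (real n)\<rceil> * 2 ^ nat \<lceil>log 2 (real n)\<rceil>"
    using le_two_power_ceiling_log[OF assms] by (intro mult_le_mono)
  also have "\<dots> = 2 ^ nat (2 * \<lceil>log 2 (real n)\<rceil>)"
    by (simp flip: power_add)
  finally show ?thesis .
qed

lemma card_offdiagonal_less:
  assumes "finite I" "I \<noteq> {}"
  shows "card (I \<times> I - Id) < card I * card I"
proof -
  obtain i where "i \<in> I"
    using assms(2) by blast
  then have "(i, i) \<in> I \<times> I" "(i, i) \<notin> I \<times> I - Id"
    by auto
  then have "I \<times> I - Id \<subset> I \<times> I"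
    by blast
  then show ?thesis
    using assms(1) psubset_card_mono[of "I \<times> I"] by (simp add: card_cartesian_product)
qed

lemma exists_parities_separating:
  fixes x :: "'i \<Rightarrow> nat \<Rightarrow> bool"
  assumes "finite A" "finite I" "card I * card I \<le> 2 ^ m"
    and distinct: "\<And>i j. i \<in> I \<Longrightarrow> j \<in> I \<Longrightarrow> i \<noteq> j \<Longrightarrow> \<exists>l\<in>A. x i l \<noteq> x j l"
  shows "\<exists>S. (\<forall>k<m. S k \<subseteq> A) \<and>
    (\<forall>i\<in>I. \<forall>j\<in>I. i \<noteq> j \<longrightarrow> (\<exists>k<m. parity (S k) (x i) \<noteq> parity (S k) (x j)))"
proof -
  define P where "P = (\<lambda>(i, j) l. x i l \<noteq> x j l) ` (I \<times> I - Id)"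
  have "finite P"
    using assms(2) by (simp add: P_def)
  moreover have "\<forall>v\<in>P. \<exists>l\<in>A. v l"
  proof
    fix v assume "v \<in> P"
    then obtain i j where "i \<in> I" "j \<in> I" "i \<noteq> j" "v = (\<lambda>l. x i l \<noteq> x j l)"
      by (auto simp: P_def)
    then show "\<exists>l\<in>A. v l"
      using distinct by blast
  qed
  moreover have "card P < 2 ^ m"
  proof (cases "I = {}")
    case False
    have "card P \<le> card (I \<times> I - Id)"
      using assms(2) unfolding P_def by (intro card_image_le) simp
    then show ?thesis
      using card_offdiagonal_less[OF assms(2) False] assms(3) by linarith
  qed (simp add: P_def)
  ultimately have "\<exists>S. (\<forall>k<m. S k \<subseteq> A) \<and> (\<forall>v\<in>P. \<exists>k<m. parity (S k) v)"
    by (rule exists_parities_odd_on_each[OF assms(1)])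
  then obtain S where S: "\<forall>k<m. S k \<subseteq> A" "\<forall>v\<in>P. \<exists>k<m. parity (S k) v"
    by blast
  have separates: "\<exists>k<m. parity (S k) (x i) \<noteq> parity (S k) (x j)"
    if "i \<in> I" "j \<in> I" "i \<noteq> j" for i j
  proof -
    have "(\<lambda>l. x i l \<noteq> x j l) \<in> P"
      using that unfolding P_def by (intro image_eqI[where x = "(i, j)"]) auto
    then obtain k where "k < m" "parity (S k) (\<lambda>l. x i l \<noteq> x j l)"
      using S(2) by blast
    moreover have "finite (S k)"
      using S(1) \<open>k < m\<close> assms(1) finite_subset by blast
    ultimately show ?thesis
      using parity_xor by blast
  qed
  show ?thesis
    using S(1) separates by (intro exI[of _ S]) simp
qed

theorem theorem8:
  fixes n D :: nat and x :: "nat \<Rightarrow> nat \<Rightarrow> bool"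
  assumes "n \<ge> 1" and "D \<ge> 1"
    and distinct: "\<And>i j. i < n \<Longrightarrow> j < n \<Longrightarrow> i \<noteq> j \<Longrightarrow> (\<exists>l<D. x i l \<noteq> x j l)"
  shows "\<exists>S :: nat \<Rightarrow> nat set.
           (\<forall>k < nat (2 * \<lceil>log 2 (real n)\<rceil>). S k \<subseteq> {0..<D}) \<and>
           (\<forall>i<n. \<forall>j<n. i \<noteq> j \<longrightarrow>
              (\<exists>k < nat (2 * \<lceil>log 2 (real n)\<rceil>). parity (S k) (x i) \<noteq> parity (S k) (x j)))"
proof -
  have card: "card {..<n} * card {..<n} \<le> 2 ^ nat (2 * \<lceil>log 2 (real n)\<rceil>)"
    using square_le_two_power_double_ceiling_log[OF assms(1)] by simp
  have differ: "\<exists>l\<in>{0..<D}. x i l \<noteq> x j l" if "i \<in> {..<n}" "j \<in> {..<n}" "i \<noteq> j" for i j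
    using distinct[of i j] that by auto
  show ?thesis
    using exists_parities_separating[OF finite_atLeastLessThan finite_lessThan card differ]
    by (simp add: Ball_def)
qed

end
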